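(* Let $N$ be a $(-1,0,1)$-matrix of size $b\times c$ such that each column $\mathbf{n}^j$ satisfies one of: (i) $\sum_{h=1}^b n^j_h=0$; (ii) $b/2$ entries of $\mathbf{n}^j$ equal $1$ and $b/2$ entries equal $0$; (iii) $b/2$ entries equal $-1$ and $b/2$ entries equal $0$; (iv) $\mathbf{n}^j=\mathbf{1}_b$; (v) $\mathbf{n}^j=-\mathbf{1}_b$. Let $\tilde N$ be the matrix obtained from $N$ by replacing each column of type (i) by $-\mathbf{n}^j$, each column of type (ii) by $\mathbf{1}_b-\mathbf{n}^j$, each column of type (iii) by $-\mathbf{1}_b-\mathbf{n}^j$, and leaving columns of types (iv) and (v) unchanged. Let $B$ be a symmetric $b\times b$ matrix with constant row (and column) sums, and let $C$ be a symmetric $c\times c$ matrix. Then the matrices $$M=\begin{pmatrix} B & N\\ N^T & C\end{pmatrix}\quad\text{and}\quad \tilde M=\begin{pmatrix} B & \tilde N\\ \tilde N^T & C\end{pmatrix}$$ are cospectral (have the same characteristic polynomial).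
   Context: $\mathbf{1}_b$ denotes the all-ones column vector of length $b$. *)

theory Defs
  imports "Jordan_Normal_Form.Char_Poly"
begin

definition col_type_i :: "real mat \<Rightarrow> nat \<Rightarrow> bool" where
  "col_type_i N j \<longleftrightarrow> (\<Sum>h<dim_row N. N $$ (h, j)) = 0"

definition col_type_ii :: "real mat \<Rightarrow> nat \<Rightarrow> bool" where
  "col_type_ii N j \<longleftrightarrow>
     2 * card {h. h < dim_row N \<and> N $$ (h, j) = 1} = dim_row N \<and>
     2 * card {h. h < dim_row N \<and> N $$ (h, j) = 0} = dim_row N"

definition col_type_iii :: "real mat \<Rightarrow> nat \<Rightarrow> bool" where
  "col_type_iii N j \<longleftrightarrow>
     2 * card {h. h < dim_row N \<and> N $$ (h, j) = -1} = dim_row N \<and>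
     2 * card {h. h < dim_row N \<and> N $$ (h, j) = 0} = dim_row N"

definition col_type_iv :: "real mat \<Rightarrow> nat \<Rightarrow> bool" where
  "col_type_iv N j \<longleftrightarrow> (\<forall>h<dim_row N. N $$ (h, j) = 1)"

definition col_type_v :: "real mat \<Rightarrow> nat \<Rightarrow> bool" where
  "col_type_v N j \<longleftrightarrow> (\<forall>h<dim_row N. N $$ (h, j) = -1)"

text \<open>For b \<ge> 1 the five types are mutually exclusive; for b = 0 all columns are empty.\<close>

definition tilde_mat :: "real mat \<Rightarrow> real mat" where
  "tilde_mat N = mat (dim_row N) (dim_col N) (\<lambda>(h, j).
     if col_type_i N j then - N $$ (h, j)
     else if col_type_ii N j then 1 - N $$ (h, j)
     else if col_type_iii N j then -1 - N $$ (h, j)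
     else N $$ (h, j))"

end

theory Submission
  imports Defs
begin

text \<open>Let \<open>Q = (2/b) J - I\<close>, with \<open>J\<close> the all-ones \<open>b \<times> b\<close> matrix; it is the reflection in
  the line spanned by the all-ones vector, hence a symmetric involution, and it commutes with
  every symmetric matrix with constant row sums. It maps a column \<open>n\<close> with entry sum \<open>s\<close> to
  \<open>(2s/b) \<one> - n\<close>; the five column types have \<open>s = 0, b/2, -b/2, b, -b\<close>, so \<open>Q N = \<tilde>N\<close>.
  Conjugating \<open>M\<close> by the involution \<open>diag(Q, I)\<close> therefore gives \<open>\<tilde>M\<close>.\<close>

definition ones_reflection_mat :: "nat \<Rightarrow> real mat" where
  "ones_reflection_mat b = mat b b (\<lambda>(i, k). 2 / real b - (if i = k then 1 else 0))"

lemma ones_reflection_mat_carrier [simp]: "ones_reflection_mat b \<in> carrier_mat b b"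
  and dim_ones_reflection_mat [simp]:
    "dim_row (ones_reflection_mat b) = b" "dim_col (ones_reflection_mat b) = b"
  by (simp_all add: ones_reflection_mat_def)

lemma transpose_ones_reflection_mat [simp]:
  "transpose_mat (ones_reflection_mat b) = ones_reflection_mat b"
  by (rule eq_matI) (auto simp: ones_reflection_mat_def)

lemma ones_reflection_mult_index:
  assumes X: "X \<in> carrier_mat b m" and i: "i < b" and j: "j < m"
  shows "(ones_reflection_mat b * X) $$ (i, j) = 2 / real b * (\<Sum>l<b. X $$ (l, j)) - X $$ (i, j)"
proof -
  have "(ones_reflection_mat b * X) $$ (i, j)
      = (\<Sum>l<b. 2 / real b * X $$ (l, j) - (if i = l then X $$ (l, j) else 0))"
    using X i j
    by (auto simp: ones_reflection_mat_def scalar_prod_def lessThan_atLeast0 left_diff_distrib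
        intro: sum.cong)
  also have "\<dots> = 2 / real b * (\<Sum>l<b. X $$ (l, j)) - X $$ (i, j)"
    using i by (simp add: sum_subtractf sum_distrib_left)
  finally show ?thesis .
qed

lemma mult_ones_reflection_index:
  assumes X: "X \<in> carrier_mat m b" and i: "i < m" and j: "j < b"
  shows "(X * ones_reflection_mat b) $$ (i, j) = 2 / real b * (\<Sum>l<b. X $$ (i, l)) - X $$ (i, j)"
proof -
  have "(X * ones_reflection_mat b) $$ (i, j)
      = (\<Sum>l<b. 2 / real b * X $$ (i, l) - (if l = j then X $$ (i, l) else 0))"
    using X i j
    by (auto simp: ones_reflection_mat_def scalar_prod_def lessThan_atLeast0 right_diff_distrib
        intro: sum.cong)
  also have "\<dots> = 2 / real b * (\<Sum>l<b. X $$ (i, l)) - X $$ (i, j)"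
    using j by (simp add: sum_subtractf sum_distrib_left)
  finally show ?thesis .
qed

lemma ones_reflection_mat_involution:
  "ones_reflection_mat b * ones_reflection_mat b = 1\<^sub>m b"
proof (rule eq_matI)
  fix i j assume "i < dim_row (1\<^sub>m b :: real mat)" "j < dim_col (1\<^sub>m b :: real mat)"
  then have i: "i < b" and j: "j < b" by auto
  have "(\<Sum>l<b. ones_reflection_mat b $$ (l, j)) = (\<Sum>l<b. 2 / real b - (if l = j then 1 else 0))"
    using j by (auto simp: ones_reflection_mat_def intro: sum.cong)
  also have "\<dots> = 1"
    using j by (simp add: sum_subtractf)
  finally show "(ones_reflection_mat b * ones_reflection_mat b) $$ (i, j) = 1\<^sub>m b $$ (i, j)"
    using i j unfolding ones_reflection_mult_index[OF ones_reflection_mat_carrier i j]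
    by (simp add: ones_reflection_mat_def)
qed auto

lemma ones_reflection_mat_commute:
  assumes B: "B \<in> carrier_mat b b" and sym: "transpose_mat B = B"
    and row_sums: "\<forall>i<b. (\<Sum>k<b. B $$ (i, k)) = r"
  shows "ones_reflection_mat b * B = B * ones_reflection_mat b"
proof (rule eq_matI)
  fix i j assume "i < dim_row (B * ones_reflection_mat b)" "j < dim_col (B * ones_reflection_mat b)"
  then have i: "i < b" and j: "j < b" using B by auto
  have "(\<Sum>l<b. B $$ (l, j)) = (\<Sum>l<b. B $$ (j, l))"
    using B j by (subst (2) sym[symmetric]) auto
  then show "(ones_reflection_mat b * B) $$ (i, j) = (B * ones_reflection_mat b) $$ (i, j)"
    unfolding ones_reflection_mult_index[OF B i j] mult_ones_reflection_index[OF B i j]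
    using i j row_sums by simp
qed (use B in auto)

lemma sum_half_value_half_zero:
  fixes f :: "nat \<Rightarrow> real"
  assumes half_v: "2 * card {l. l < b \<and> f l = v} = b"
    and half_0: "2 * card {l. l < b \<and> f l = 0} = b" and "v \<noteq> 0"
  shows "(\<Sum>l<b. f l) = real b / 2 * v"
proof -
  let ?S = "{l. l < b \<and> f l = v}" and ?T = "{l. l < b \<and> f l = 0}"
  have disj: "?S \<inter> ?T = {}" using \<open>v \<noteq> 0\<close> by auto
  have "card (?S \<union> ?T) = card {..<b}"
    using card_Un_disjoint[OF _ _ disj] half_v half_0 by simp
  then have cover: "?S \<union> ?T = {..<b}"
    by (intro card_subset_eq) auto
  have "(\<Sum>l<b. f l) = (\<Sum>l\<in>?S. f l) + (\<Sum>l\<in>?T. f l)"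
    unfolding cover[symmetric] by (rule sum.union_disjoint[OF _ _ disj]) auto
  also have "\<dots> = real (card ?S) * v" by simp
  finally show ?thesis
    using arg_cong[OF half_v, of real] by simp
qed

lemma tilde_mat_index:
  assumes N: "N \<in> carrier_mat b c" and h: "h < b" and j: "j < c"
    and types: "col_type_i N j \<or> col_type_ii N j \<or> col_type_iii N j \<or>
                col_type_iv N j \<or> col_type_v N j"
  shows "tilde_mat N $$ (h, j) = 2 / real b * (\<Sum>l<b. N $$ (l, j)) - N $$ (h, j)"
proof -
  have b: "dim_row N = b" and "real b \<noteq> 0" using N h by auto
  have tilde: "tilde_mat N $$ (h, j) = (if col_type_i N j then - N $$ (h, j)
     else if col_type_ii N j then 1 - N $$ (h, j)
     else if col_type_iii N j then -1 - N $$ (h, j)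
     else N $$ (h, j))" using N h j by (simp add: tilde_mat_def)
  consider "col_type_i N j" | "\<not> col_type_i N j" "col_type_ii N j"
    | "\<not> col_type_i N j" "\<not> col_type_ii N j" "col_type_iii N j"
    | "\<not> col_type_i N j" "\<not> col_type_ii N j" "\<not> col_type_iii N j" "col_type_iv N j"
    | "\<not> col_type_i N j" "\<not> col_type_ii N j" "\<not> col_type_iii N j" "col_type_v N j"
    using types by blast
  then show ?thesis
  proof cases
    case 1
    then show ?thesis using tilde b by (simp add: col_type_i_def)
  next
    case 2
    then have "(\<Sum>l<b. N $$ (l, j)) = real b / 2"
      using sum_half_value_half_zero[of b "\<lambda>l. N $$ (l, j)" 1] b by (simp add: col_type_ii_def)
    then show ?thesis using tilde 2 \<open>real b \<noteq> 0\<close> by simp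
  next
    case 3
    then have "(\<Sum>l<b. N $$ (l, j)) = - real b / 2"
      using sum_half_value_half_zero[of b "\<lambda>l. N $$ (l, j)" "-1"] b by (simp add: col_type_iii_def)
    then show ?thesis using tilde 3 \<open>real b \<noteq> 0\<close> by simp
  next
    case 4
    then show ?thesis using tilde b h \<open>real b \<noteq> 0\<close> by (simp add: col_type_iv_def)
  next
    case 5
    then show ?thesis using tilde b h \<open>real b \<noteq> 0\<close> by (simp add: col_type_v_def)
  qed
qed

lemma ones_reflection_mult_eq_tilde_mat:
  assumes N: "N \<in> carrier_mat b c"
    and types: "\<forall>j<c. col_type_i N j \<or> col_type_ii N j \<or> col_type_iii N j \<or>
                col_type_iv N j \<or> col_type_v N j"
  shows "ones_reflection_mat b * N = tilde_mat N"
proof (rule eq_matI)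
  fix h j assume "h < dim_row (tilde_mat N)" "j < dim_col (tilde_mat N)"
  then have h: "h < b" and j: "j < c" using N by (auto simp: tilde_mat_def)
  then show "(ones_reflection_mat b * N) $$ (h, j) = tilde_mat N $$ (h, j)"
    using types by (simp add: ones_reflection_mult_index[OF N h j] tilde_mat_index[OF N h j])
qed (use N in \<open>auto simp: tilde_mat_def\<close>)

lemma char_poly_four_block_mat_conj_involution:
  fixes Q A N N' C :: "'a :: comm_ring_1 mat"
  assumes Q: "Q \<in> carrier_mat b b" and QQ: "Q * Q = 1\<^sub>m b"
    and A: "A \<in> carrier_mat b b" and N: "N \<in> carrier_mat b c"
    and N': "N' \<in> carrier_mat c b" and C: "C \<in> carrier_mat c c"
  shows "char_poly (four_block_mat A N N' C) = char_poly (four_block_mat (Q * A * Q) (Q * N) (N' * Q) C)"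
proof -
  define P where "P = four_block_mat Q (0\<^sub>m b c) (0\<^sub>m c b) (1\<^sub>m c)"
  define M where "M = four_block_mat A N N' C"
  note Z = zero_carrier_mat and I = one_carrier_mat
  have P: "P \<in> carrier_mat (b + c) (b + c)" and M: "M \<in> carrier_mat (b + c) (b + c)"
    using Q A N N' C by (auto simp: P_def M_def)
  have "P * P = 1\<^sub>m (b + c)"
    using Q QQ by (simp add: P_def mult_four_block_mat[OF Q Z Z I Q Z Z I])
  then have "similar_mat (P * M * P) M"
    using P M by (intro similar_matI[where n = "b + c" and P = P and Q = P]) auto
  moreover have "P * M * P = four_block_mat (Q * A * Q) (Q * N) (N' * Q) C"
    using Q A N N' C
    by (simp add: P_def M_def mult_four_block_mat[OF Q Z Z I A N N' C]
        mult_four_block_mat[OF mult_carrier_mat[OF Q A] mult_carrier_mat[OF Q N] N' C Q Z Z I])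
  ultimately show ?thesis
    using char_poly_similar by (metis M_def)
qed

theorem proposition3p4:
  fixes B N C :: "real mat" and b c :: nat
  assumes "B \<in> carrier_mat b b" and "N \<in> carrier_mat b c" and "C \<in> carrier_mat c c"
    and "\<forall>h<b. \<forall>j<c. N $$ (h, j) \<in> {-1, 0, 1}"
    and "\<forall>j<c. col_type_i N j \<or> col_type_ii N j \<or> col_type_iii N j \<or>
                col_type_iv N j \<or> col_type_v N j"
    and "transpose_mat B = B"
    and "\<exists>r. \<forall>i<b. (\<Sum>k<b. B $$ (i, k)) = r"
    and "transpose_mat C = C"
  shows "char_poly (four_block_mat B N (transpose_mat N) C) =
         char_poly (four_block_mat B (tilde_mat N) (transpose_mat (tilde_mat N)) C)"
proof -
  \<comment> \<open>Neither the restriction to entries in \<open>{-1, 0, 1}\<close> nor the symmetry of \<open>C\<close> is needed.\<close>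
  let ?Q = "ones_reflection_mat b"
  obtain r where row_sums: "\<forall>i<b. (\<Sum>k<b. B $$ (i, k)) = r" using assms(7) by blast
  have QN: "?Q * N = tilde_mat N"
    using assms(2,5) by (rule ones_reflection_mult_eq_tilde_mat)
  have "?Q * B * ?Q = B"
    using assms(1) ones_reflection_mat_commute[OF assms(1,6) row_sums]
    by (simp add: assoc_mult_mat[of _ b b _ b _ b] ones_reflection_mat_involution)
  moreover have "transpose_mat N * ?Q = transpose_mat (tilde_mat N)"
    using assms(2) by (simp flip: QN add: transpose_mult[of _ b b _ c])
  ultimately show ?thesis
    using char_poly_four_block_mat_conj_involution[OF ones_reflection_mat_carrier
        ones_reflection_mat_involution assms(1,2) transpose_carrier_mat[THEN iffD2, OF assms(2)] assms(3)]
    by (simp add: QN)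
qed

end
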